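(* Let $P$ be a pseudotree and let $Z$ be a set of vertices such that $\alpha(P) > \alpha(P-Z)$. Then there exist three (possibly non-distinct) vertices $u,v,w \in Z \cap V(P)$ such that $\alpha(P) > \alpha(P-\{u,v,w\})$.
   Context: A pseudotree is a connected finite simple graph containing at most one cycle. $\alpha(H)$ denotes the maximum size of an independent set of a graph $H$. For a vertex set $S$, $P - S$ denotes the graph obtained from $P$ by deleting the vertices of $S\cap V(P)$ and their incident edges. *)

theory Defs
  imports Main
begin

definition simple_graph :: "'a set \<Rightarrow> 'a set set \<Rightarrow> bool" where
  "simple_graph V E \<longleftrightarrow> finite V \<and>
     (\<forall>e\<in>E. \<exists>u v. u \<noteq> v \<and> u \<in> V \<and> v \<in> V \<and> e = {u, v})"

definition graph_connected :: "'a set \<Rightarrow> 'a set set \<Rightarrow> bool" where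
  "graph_connected V E \<longleftrightarrow> V \<noteq> {} \<and>
     (\<forall>u\<in>V. \<forall>v\<in>V. (u, v) \<in> {(x, y). {x, y} \<in> E}\<^sup>*)"

definition is_cycle :: "'a set set \<Rightarrow> 'a set set \<Rightarrow> bool" where
  "is_cycle E C \<longleftrightarrow> (\<exists>vs. length vs \<ge> 3 \<and> distinct vs \<and>
     (\<forall>i<length vs. {vs ! i, vs ! ((i + 1) mod length vs)} \<in> E) \<and>
     C = {{vs ! i, vs ! ((i + 1) mod length vs)} | i. i < length vs})"

definition pseudotree :: "'a set \<Rightarrow> 'a set set \<Rightarrow> bool" where
  "pseudotree V E \<longleftrightarrow> simple_graph V E \<and> graph_connected V E \<and>
     (\<forall>C1 C2. is_cycle E C1 \<longrightarrow> is_cycle E C2 \<longrightarrow> C1 = C2)"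

definition independent_set :: "'a set \<Rightarrow> 'a set set \<Rightarrow> 'a set \<Rightarrow> bool" where
  "independent_set V E S \<longleftrightarrow> S \<subseteq> V \<and> (\<forall>u\<in>S. \<forall>v\<in>S. {u, v} \<notin> E)"

definition alpha :: "'a set \<Rightarrow> 'a set set \<Rightarrow> nat" where
  "alpha V E = Max (card ` {S. independent_set V E S})"

definition del_verts :: "'a set \<Rightarrow> 'a set set \<Rightarrow> 'a set \<Rightarrow> 'a set \<times> 'a set set" where
  "del_verts V E S = (V - S, {e \<in> E. e \<inter> S = {}})"

end

theory Submission
  imports Defs
begin

text \<open>Call a vertex set a hitting set if it meets every maximum independent set; the hypothesis
  \<open>\<alpha>(P) > \<alpha>(P - Z)\<close> says precisely that \<open>Z\<close> is one. By induction on the number of vertices,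
  every hitting set of a graph with at most one cycle contains a hitting set of at most three
  vertices, and of at most two if the graph is a forest.

  An isolated vertex lies in every maximum independent set, and a leaf \<open>x\<close> with neighbour \<open>y\<close>
  has exactly one of \<open>x\<close>, \<open>y\<close> in every maximum independent set, so that removing both lowers
  \<open>\<alpha>\<close> by one. Hence either \<open>{x}\<close> or \<open>{x, y}\<close> is already a hitting set, or one recurses on
  \<open>P - {x, y}\<close>; when \<open>x \<in> Z\<close> but \<open>y \<notin> Z\<close>, one recurses with \<open>Z \<union> N(y)\<close> and trades the
  neighbours of \<open>y\<close> in the result for \<open>x\<close>. If all degrees are at least two, the unique cycle is a
  union of components: if \<open>Z\<close> misses it, recurse on the rest; otherwise \<open>Z\<close> contains a cycle
  vertex \<open>v\<close> and \<open>P - v\<close> is a forest, so \<open>{v}\<close> works unless \<open>\<alpha>(P - v) = \<alpha>(P)\<close>, in which case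
  \<open>v\<close> together with a two-element hitting set of \<open>P - v\<close> does.\<close>

section \<open>Independent sets and vertex deletion\<close>

definition edges_avoiding :: "'a set set \<Rightarrow> 'a set \<Rightarrow> 'a set set" where
  "edges_avoiding E S = {e \<in> E. e \<inter> S = {}}"

lemma edges_avoiding_subset: "edges_avoiding E S \<subseteq> E"
  unfolding edges_avoiding_def by blast

definition max_indep_set :: "'a set \<Rightarrow> 'a set set \<Rightarrow> 'a set \<Rightarrow> bool" where
  "max_indep_set V E J \<longleftrightarrow> independent_set V E J \<and> card J = alpha V E"

definition meets_max_indep_sets :: "'a set \<Rightarrow> 'a set set \<Rightarrow> 'a set \<Rightarrow> bool" where
  "meets_max_indep_sets V E Z \<longleftrightarrow> (\<forall>J. max_indep_set V E J \<longrightarrow> J \<inter> Z \<noteq> {})"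

lemma simple_graph_finite: "simple_graph V E \<Longrightarrow> finite V"
  unfolding simple_graph_def by blast

lemma simple_graph_edgeD:
  assumes "simple_graph V E" "{u, v} \<in> E"
  shows "u \<noteq> v" "u \<in> V" "v \<in> V"
proof -
  obtain a b where "a \<noteq> b" "a \<in> V" "b \<in> V" "{u, v} = {a, b}"
    using assms unfolding simple_graph_def by blast
  then show "u \<noteq> v" "u \<in> V" "v \<in> V" by (auto simp: doubleton_eq_iff)
qed

lemma simple_graph_delete:
  assumes "simple_graph V E"
  shows "simple_graph (V - S) (edges_avoiding E S)"
proof -
  have "\<exists>u v. u \<noteq> v \<and> u \<in> V - S \<and> v \<in> V - S \<and> e = {u, v}"
    if "e \<in> E" "e \<inter> S = {}" for e
  proof -
    obtain u v where "u \<noteq> v" "u \<in> V" "v \<in> V" "e = {u, v}"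
      using assms \<open>e \<in> E\<close> unfolding simple_graph_def by blast
    with \<open>e \<inter> S = {}\<close> show ?thesis by blast
  qed
  then show ?thesis
    using assms unfolding simple_graph_def edges_avoiding_def by auto
qed

lemma independent_set_finite: "finite V \<Longrightarrow> independent_set V E J \<Longrightarrow> finite J"
  unfolding independent_set_def using finite_subset by blast

lemma independent_set_subset: "independent_set V E J \<Longrightarrow> K \<subseteq> J \<Longrightarrow> independent_set V E K"
  unfolding independent_set_def by blast

lemma independent_set_insert:
  assumes "simple_graph V E" "independent_set V E K" "z \<in> V" "\<And>u. u \<in> K \<Longrightarrow> {z, u} \<notin> E"
  shows "independent_set V E (insert z K)"
proof -
  have "{z} \<notin> E"
    using simple_graph_edgeD(1)[OF assms(1), of z z] by auto
  with assms(2-4) show ?thesis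
    unfolding independent_set_def by (auto simp: insert_commute)
qed

lemma independent_set_delete_iff:
  "independent_set (V - S) (edges_avoiding E S) K \<longleftrightarrow> independent_set V E K \<and> K \<inter> S = {}"
  unfolding independent_set_def edges_avoiding_def by blast

lemma finite_independent_sets: "finite V \<Longrightarrow> finite {S. independent_set V E S}"
  unfolding independent_set_def by (rule finite_subset[of _ "Pow V"]) auto

lemma card_le_alpha: "finite V \<Longrightarrow> independent_set V E J \<Longrightarrow> card J \<le> alpha V E"
  unfolding alpha_def by (rule Max_ge) (simp_all add: finite_independent_sets)

lemma max_indep_set_exists: "finite V \<Longrightarrow> \<exists>J. max_indep_set V E J"
proof -
  assume "finite V"
  then have "finite {S. independent_set V E S}"
    by (rule finite_independent_sets)
  moreover have "{} \<in> {S. independent_set V E S}"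
    by (simp add: independent_set_def)
  ultimately have "alpha V E \<in> card ` {S. independent_set V E S}"
    unfolding alpha_def by (intro Max_in) auto
  then show ?thesis
    unfolding max_indep_set_def by auto
qed

lemma max_indep_setD:
  "max_indep_set V E J \<Longrightarrow> independent_set V E J"
  "max_indep_set V E J \<Longrightarrow> card J = alpha V E"
  unfolding max_indep_set_def by auto

lemma alpha_delete_le:
  assumes "finite V"
  shows "alpha (V - S) (edges_avoiding E S) \<le> alpha V E"
proof -
  obtain K where K: "max_indep_set (V - S) (edges_avoiding E S) K"
    using max_indep_set_exists finite_Diff[OF assms] by blast
  then have "independent_set V E K"
    using independent_set_delete_iff max_indep_setD(1) by blast
  then show ?thesis
    using card_le_alpha[OF assms, of E K] max_indep_setD(2)[OF K] by simp
qed

lemma max_indep_set_dominates: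
  assumes G: "simple_graph V E" and J: "max_indep_set V E J" and z: "z \<in> V" "z \<notin> J"
  shows "\<exists>u\<in>J. {z, u} \<in> E"
proof (rule ccontr)
  assume "\<not> (\<exists>u\<in>J. {z, u} \<in> E)"
  then have "independent_set V E (insert z J)"
    using independent_set_insert[OF G max_indep_setD(1)[OF J] z(1)] by blast
  moreover have "card (insert z J) = Suc (alpha V E)"
    using J z(2) independent_set_finite[OF simple_graph_finite[OF G] max_indep_setD(1)[OF J]]
    by (simp add: max_indep_set_def)
  ultimately show False
    using card_le_alpha[OF simple_graph_finite[OF G], of E "insert z J"] by simp
qed

lemma meets_max_indep_sets_iff_alpha_less:
  assumes "finite V"
  shows "meets_max_indep_sets V E Z \<longleftrightarrow> alpha (V - Z) (edges_avoiding E Z) < alpha V E"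
proof
  assume meets: "meets_max_indep_sets V E Z"
  obtain K where K: "max_indep_set (V - Z) (edges_avoiding E Z) K"
    using max_indep_set_exists finite_Diff[OF assms] by blast
  then have K_indep: "independent_set V E K" and K_Z: "K \<inter> Z = {}"
    by (simp_all add: max_indep_set_def independent_set_delete_iff)
  have "\<not> max_indep_set V E K"
    using meets K_Z unfolding meets_max_indep_sets_def by blast
  then have "card K < alpha V E"
    using card_le_alpha[OF assms K_indep] K_indep unfolding max_indep_set_def by simp
  then show "alpha (V - Z) (edges_avoiding E Z) < alpha V E"
    using max_indep_setD(2)[OF K] by simp
next
  assume less: "alpha (V - Z) (edges_avoiding E Z) < alpha V E"
  show "meets_max_indep_sets V E Z"
    unfolding meets_max_indep_sets_def
  proof (intro allI impI notI)
    fix J assume J: "max_indep_set V E J" and "J \<inter> Z = {}"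
    then have "independent_set (V - Z) (edges_avoiding E Z) J"
      by (simp add: max_indep_set_def independent_set_delete_iff)
    then have "card J \<le> alpha (V - Z) (edges_avoiding E Z)"
      by (rule card_le_alpha[OF finite_Diff[OF assms]])
    then show False
      using less max_indep_setD(2)[OF J] by simp
  qed
qed

lemma meets_max_indep_sets_nonempty:
  assumes "finite V" "meets_max_indep_sets V E Z"
  shows "Z \<inter> V \<noteq> {}"
proof -
  obtain J where J: "max_indep_set V E J"
    using max_indep_set_exists[OF assms(1)] by blast
  then have "J \<subseteq> V"
    using max_indep_setD(1) unfolding independent_set_def by blast
  moreover have "J \<inter> Z \<noteq> {}"
    using J assms(2) unfolding meets_max_indep_sets_def by blast
  ultimately show ?thesis
    by blast
qed

section \<open>Deleting a union of components\<close>

definition edge_closed :: "'a set set \<Rightarrow> 'a set \<Rightarrow> bool" where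
  "edge_closed E A \<longleftrightarrow> (\<forall>e\<in>E. e \<subseteq> A \<or> e \<inter> A = {})"

lemma independent_set_Un_edge_closed:
  assumes A: "edge_closed E A" and K: "independent_set V E K" "K \<inter> A = {}"
    and L: "independent_set V E L" "L \<subseteq> A"
  shows "independent_set V E (K \<union> L)"
proof -
  have "{u, v} \<notin> E" if u: "u \<in> K \<union> L" and v: "v \<in> K \<union> L" for u v
  proof
    assume e: "{u, v} \<in> E"
    with A have "{u, v} \<subseteq> A \<or> {u, v} \<inter> A = {}"
      unfolding edge_closed_def by (rule bspec)
    then show False
    proof
      assume "{u, v} \<subseteq> A"
      then have "u \<in> L" "v \<in> L"
        using u v K(2) by auto
      with e L(1) show False
        unfolding independent_set_def by blast
    next
      assume "{u, v} \<inter> A = {}"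
      then have "u \<in> K" "v \<in> K"
        using u v L(2) by auto
      with e K(1) show False
        unfolding independent_set_def by blast
    qed
  qed
  with K(1) L(1) show ?thesis
    unfolding independent_set_def by blast
qed

lemma max_indep_set_delete_edge_closed:
  assumes V: "finite V" and A: "edge_closed E A" and J: "max_indep_set V E J"
  shows "max_indep_set (V - A) (edges_avoiding E A) (J - A)"
proof -
  have J_indep: "independent_set V E J"
    using J by (rule max_indep_setD)
  then have "independent_set V E (J - A)" "independent_set V E (J \<inter> A)"
    by (auto intro: independent_set_subset)
  then have J_A: "independent_set (V - A) (edges_avoiding E A) (J - A)"
    by (auto simp: independent_set_delete_iff)
  obtain K where K: "max_indep_set (V - A) (edges_avoiding E A) K"
    using max_indep_set_exists finite_Diff[OF V] by blast
  then have K_indep: "independent_set V E K" and K_A: "K \<inter> A = {}"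
    by (simp_all add: max_indep_set_def independent_set_delete_iff)
  have finite: "finite J" "finite K"
    using independent_set_finite[OF V] J_indep K_indep by simp_all
  have "independent_set V E (J \<inter> A)"
    using J_indep by (rule independent_set_subset) blast
  then have "independent_set V E (K \<union> (J \<inter> A))"
    by (rule independent_set_Un_edge_closed[OF A K_indep K_A]) blast
  then have "card (K \<union> (J \<inter> A)) \<le> card J"
    using card_le_alpha[OF V] max_indep_setD(2)[OF J] by simp
  moreover have "card (K \<union> (J \<inter> A)) = card K + card (J \<inter> A)"
    using finite K_A by (intro card_Un_disjoint) auto
  ultimately have "card K + card (J \<inter> A) \<le> card J"
    by simp
  then have "alpha (V - A) (edges_avoiding E A) \<le> card (J - A)"
    using max_indep_setD(2)[OF K] card_Int_Diff[OF finite(1), of A] by simp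
  with J_A show ?thesis
    unfolding max_indep_set_def using card_le_alpha[OF finite_Diff[OF V] J_A] by simp
qed

lemma meets_max_indep_sets_of_delete_edge_closed:
  assumes "finite V" "edge_closed E A" "meets_max_indep_sets (V - A) (edges_avoiding E A) T"
  shows "meets_max_indep_sets V E T"
  unfolding meets_max_indep_sets_def
proof (intro allI impI)
  fix J assume "max_indep_set V E J"
  then have "(J - A) \<inter> T \<noteq> {}"
    using assms max_indep_set_delete_edge_closed unfolding meets_max_indep_sets_def by blast
  then show "J \<inter> T \<noteq> {}"
    by blast
qed

lemma meets_max_indep_sets_delete_edge_closed:
  assumes V: "finite V" and A: "edge_closed E A" and Z: "meets_max_indep_sets V E Z" "Z \<inter> A = {}"
  shows "meets_max_indep_sets (V - A) (edges_avoiding E A) Z"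
  unfolding meets_max_indep_sets_def
proof (intro allI impI)
  fix K assume K: "max_indep_set (V - A) (edges_avoiding E A) K"
  then have K_indep: "independent_set V E K" and K_A: "K \<inter> A = {}"
    by (simp_all add: max_indep_set_def independent_set_delete_iff)
  obtain J where J: "max_indep_set V E J"
    using max_indep_set_exists[OF V] by blast
  have J_indep: "independent_set V E J"
    using J by (rule max_indep_setD)
  have finite: "finite J" "finite K"
    using independent_set_finite[OF V] J_indep K_indep by simp_all
  have "independent_set V E (J \<inter> A)"
    using J_indep by (rule independent_set_subset) blast
  then have KJ_indep: "independent_set V E (K \<union> (J \<inter> A))"
    by (rule independent_set_Un_edge_closed[OF A K_indep K_A]) blast
  have "card K = card (J - A)"
    using K max_indep_set_delete_edge_closed[OF V A J] by (simp add: max_indep_set_def)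
  then have "card (K \<union> (J \<inter> A)) = alpha V E"
    using finite K_A card_Int_Diff[OF finite(1), of A] max_indep_setD(2)[OF J]
    by (subst card_Un_disjoint) auto
  then have "max_indep_set V E (K \<union> (J \<inter> A))"
    using KJ_indep unfolding max_indep_set_def by blast
  then show "K \<inter> Z \<noteq> {}"
    using Z unfolding meets_max_indep_sets_def by blast
qed

section \<open>Cycles in graphs of minimum degree two\<close>

definition at_most_one_cycle :: "'a set set \<Rightarrow> bool" where
  "at_most_one_cycle E \<longleftrightarrow> (\<forall>C1 C2. is_cycle E C1 \<longrightarrow> is_cycle E C2 \<longrightarrow> C1 = C2)"

lemma is_cycle_mono: "E' \<subseteq> E \<Longrightarrow> is_cycle E' C \<Longrightarrow> is_cycle E C"
  unfolding is_cycle_def by blast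

lemma is_cycle_subset: "is_cycle E C \<Longrightarrow> C \<subseteq> E"
  unfolding is_cycle_def by blast

lemma at_most_one_cycle_delete: "at_most_one_cycle E \<Longrightarrow> at_most_one_cycle (edges_avoiding E S)"
  unfolding at_most_one_cycle_def using is_cycle_mono[OF edges_avoiding_subset] by blast

lemma Union_cycle_edges:
  assumes "vs \<noteq> []"
  shows "\<Union>{{vs ! i, vs ! ((i + 1) mod length vs)} | i. i < length vs} = set vs"
proof
  show "\<Union>{{vs ! i, vs ! ((i + 1) mod length vs)} | i. i < length vs} \<subseteq> set vs"
    using assms by auto
  show "set vs \<subseteq> \<Union>{{vs ! i, vs ! ((i + 1) mod length vs)} | i. i < length vs}"
  proof
    fix z assume "z \<in> set vs"
    then obtain i where "i < length vs" "z = vs ! i"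
      by (auto simp: in_set_conv_nth)
    then show "z \<in> \<Union>{{vs ! i, vs ! ((i + 1) mod length vs)} | i. i < length vs}"
      by blast
  qed
qed

lemma cycle_vertices_nonempty:
  assumes "is_cycle E C"
  shows "\<Union>C \<noteq> {}"
proof -
  obtain vs where "3 \<le> length vs" "C = {{vs ! i, vs ! ((i + 1) mod length vs)} | i. i < length vs}"
    using assms unfolding is_cycle_def by blast
  moreover have "vs \<noteq> []"
    using \<open>3 \<le> length vs\<close> by auto
  ultimately show ?thesis
    using Union_cycle_edges[of vs] by simp
qed

lemma nonbacktracking_walk:
  assumes G: "simple_graph V E"
    and degree: "\<And>z. z \<in> V \<Longrightarrow> \<exists>y1 y2. y1 \<noteq> y2 \<and> {z, y1} \<in> E \<and> {z, y2} \<in> E"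
    and ab: "{a, b} \<in> E"
  shows "\<exists>w. w 0 = a \<and> w 1 = b \<and> (\<forall>n. {w n, w (Suc n)} \<in> E \<and> w (Suc (Suc n)) \<noteq> w n)"
proof -
  have "\<exists>f. \<forall>n. ({fst (f n), snd (f n)} \<in> E \<and> (n = 0 \<longrightarrow> f n = (a, b))) \<and>
      fst (f (Suc n)) = snd (f n) \<and> snd (f (Suc n)) \<noteq> fst (f n)"
  proof (rule dependent_nat_choice)
    show "\<exists>pq. {fst pq, snd pq} \<in> E \<and> (0 = (0::nat) \<longrightarrow> pq = (a, b))"
      using ab by auto
  next
    fix pq :: "'a \<times> 'a" and n :: nat
    assume "{fst pq, snd pq} \<in> E \<and> (n = 0 \<longrightarrow> pq = (a, b))"
    then have "snd pq \<in> V"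
      using simple_graph_edgeD(3)[OF G] by blast
    then obtain y1 y2 where "y1 \<noteq> y2" "{snd pq, y1} \<in> E" "{snd pq, y2} \<in> E"
      using degree by blast
    then obtain r where "{snd pq, r} \<in> E" "r \<noteq> fst pq"
      by blast
    then show "\<exists>qr. ({fst qr, snd qr} \<in> E \<and> (Suc n = 0 \<longrightarrow> qr = (a, b))) \<and>
        fst qr = snd pq \<and> snd qr \<noteq> fst pq"
      by (intro exI[of _ "(snd pq, r)"]) simp
  qed
  then obtain f where f: "\<And>n. {fst (f n), snd (f n)} \<in> E \<and> (n = 0 \<longrightarrow> f n = (a, b))"
      "\<And>n. fst (f (Suc n)) = snd (f n)" "\<And>n. snd (f (Suc n)) \<noteq> fst (f n)"
    by blast
  define w where "w n = fst (f n)" for n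
  have "w 0 = a" "w 1 = b"
    using f(1)[of 0] f(2)[of 0] unfolding w_def by simp_all
  moreover have "{w n, w (Suc n)} \<in> E" "w (Suc (Suc n)) \<noteq> w n" for n
    using f(1)[of n] f(2) f(3)[of n] unfolding w_def by simp_all
  ultimately show ?thesis
    by blast
qed

lemma first_repetition:
  fixes w :: "nat \<Rightarrow> 'a"
  assumes "finite (range w)"
  obtains k m where "k < m" "w k = w m" "inj_on w {..<m}"
proof -
  define P where "P m \<longleftrightarrow> (\<exists>k<m. w k = w m)" for m
  have repeat: "P (max i j)" if "i \<noteq> j" "w i = w j" for i j
    unfolding P_def using that by (intro exI[of _ "min i j"]) (auto simp: min_def max_def)
  have "\<not> inj w"
    using assms finite_imageD[of w UNIV] by auto
  then obtain i j where "i \<noteq> j" "w i = w j"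
    unfolding inj_def by blast
  then have "P (max i j)"
    by (rule repeat)
  define m where "m = (LEAST m. P m)"
  have "P m"
    unfolding m_def by (rule LeastI) fact
  then obtain k where "k < m" "w k = w m"
    unfolding P_def by blast
  moreover have "inj_on w {..<m}"
  proof (rule inj_onI, rule ccontr)
    fix p q assume "p \<in> {..<m}" "q \<in> {..<m}" "w p = w q" "p \<noteq> q"
    then have "P (max p q)" "max p q < m"
      using repeat by auto
    then show False
      using not_less_Least[of "max p q" P] unfolding m_def by blast
  qed
  ultimately show ?thesis
    using that by blast
qed

text \<open>The cycle closed by the first repetition of the walk can contain \<open>w 0\<close> only if it starts
  there, and then it also contains \<open>w 1\<close>; this is what makes the vertex set of a unique cycle
  edge-closed.\<close>

lemma nonbacktracking_walk_cycle:
  assumes G: "simple_graph V E"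
    and walk: "\<And>n. {w n, w (Suc n)} \<in> E" "\<And>n. w (Suc (Suc n)) \<noteq> w n"
  shows "\<exists>C. is_cycle E C \<and> (w 0 \<in> \<Union>C \<longrightarrow> w 1 \<in> \<Union>C)"
proof -
  have "range w \<subseteq> V"
    using simple_graph_edgeD(2)[OF G walk(1)] by blast
  then have "finite (range w)"
    using simple_graph_finite[OF G] finite_subset by blast
  then obtain k m where km: "k < m" "w k = w m" and inj: "inj_on w {..<m}"
    by (rule first_repetition)
  define vs where "vs = map w [k..<m]"
  have length: "length vs = m - k"
    unfolding vs_def by simp
  have nth: "i < m - k \<Longrightarrow> vs ! i = w (k + i)" for i
    unfolding vs_def by simp
  have "m \<noteq> Suc k"
    using km(2) simple_graph_edgeD(1)[OF G walk(1)[of k]] by auto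
  moreover have "m \<noteq> Suc (Suc k)"
    using km(2) walk(2)[of k] by auto
  ultimately have three: "3 \<le> length vs"
    using km(1) length by linarith
  have "distinct vs"
    unfolding vs_def by (simp add: distinct_map) (rule inj_on_subset[OF inj], auto)
  moreover have "{vs ! i, vs ! ((i + 1) mod length vs)} \<in> E" if "i < length vs" for i
  proof (cases "i + 1 < length vs")
    case True
    then show ?thesis
      using walk(1)[of "k + i"] nth length by simp
  next
    case False
    then have "i + 1 = m - k"
      using that length by simp
    then have "Suc (k + i) = m" "(i + 1) mod length vs = 0"
      using length km(1) by auto
    then show ?thesis
      using walk(1)[of "k + i"] nth[of i] nth[of 0] km by simp
  qed
  ultimately have cycle: "is_cycle E {{vs ! i, vs ! ((i + 1) mod length vs)} | i. i < length vs}"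
    (is "is_cycle E ?C")
    unfolding is_cycle_def using three by blast
  have vertices: "\<Union>?C = set vs"
    by (rule Union_cycle_edges) (use three in auto)
  have "w 1 \<in> set vs" if start: "w 0 \<in> set vs"
  proof -
    obtain t where "t < m - k" "w (k + t) = w 0"
      using start length nth by (auto simp: in_set_conv_nth)
    then have "k = 0"
      using inj km(1) unfolding inj_on_def by fastforce
    moreover have "1 < length vs"
      using three by simp
    ultimately show ?thesis
      using nth[of 1] length nth_mem[of 1 vs] by simp
  qed
  with cycle vertices show ?thesis
    by blast
qed

lemma min_degree_two_cycle:
  assumes G: "simple_graph V E"
    and degree: "\<And>z. z \<in> V \<Longrightarrow> \<exists>y1 y2. y1 \<noteq> y2 \<and> {z, y1} \<in> E \<and> {z, y2} \<in> E"
    and ab: "{a, b} \<in> E"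
  shows "\<exists>C. is_cycle E C \<and> (a \<in> \<Union>C \<longrightarrow> b \<in> \<Union>C)"
  using nonbacktracking_walk[OF assms] nonbacktracking_walk_cycle[OF G] by metis

lemma unique_cycle_edge_closed:
  assumes G: "simple_graph V E" and E: "at_most_one_cycle E" and C: "is_cycle E C"
    and degree: "\<And>z. z \<in> V \<Longrightarrow> \<exists>y1 y2. y1 \<noteq> y2 \<and> {z, y1} \<in> E \<and> {z, y2} \<in> E"
  shows "edge_closed E (\<Union>C)"
proof -
  have out: "q \<in> \<Union>C" if "{p, q} \<in> E" "p \<in> \<Union>C" for p q
    using min_degree_two_cycle[OF G degree that(1)] C E that(2)
    unfolding at_most_one_cycle_def by blast
  show ?thesis
    unfolding edge_closed_def
  proof
    fix e assume "e \<in> E"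
    then obtain p q where "e = {p, q}" "{q, p} \<in> E"
      using G unfolding simple_graph_def by (metis insert_commute)
    then show "e \<subseteq> \<Union>C \<or> e \<inter> \<Union>C = {}"
      using out[of p q] out[of q p] \<open>e \<in> E\<close> by blast
  qed
qed

section \<open>Pendant edges\<close>

locale pendant_edge =
  fixes V :: "'a set" and E :: "'a set set" and x y :: 'a
  assumes graph: "simple_graph V E" and edge: "{x, y} \<in> E"
    and pendant: "\<And>u. {x, u} \<in> E \<Longrightarrow> u = y"
begin

abbreviation "V' \<equiv> V - {x, y}"
abbreviation "E' \<equiv> edges_avoiding E {x, y}"

lemma finite: "finite V"
  using graph by (rule simple_graph_finite)

lemma endpoints: "x \<noteq> y" "x \<in> V" "y \<in> V"
  using simple_graph_edgeD[OF graph edge] by simp_all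

lemma max_indep_set_endpoint:
  assumes J: "max_indep_set V E J"
  shows "J \<inter> {x, y} = {x} \<or> J \<inter> {x, y} = {y}"
proof -
  have "x \<in> J \<or> y \<in> J"
    using max_indep_set_dominates[OF graph J endpoints(2)] pendant by blast
  moreover have "\<not> (x \<in> J \<and> y \<in> J)"
    using max_indep_setD(1)[OF J] edge unfolding independent_set_def by blast
  ultimately show ?thesis
    by blast
qed

lemma independent_set_insert_endpoint:
  assumes K: "independent_set V' E' K" and z: "z \<in> {x, y}" and no_edge: "\<And>r. r \<in> K \<Longrightarrow> {z, r} \<notin> E"
  shows "independent_set V E (insert z K)"
  using independent_set_insert[OF graph _ _ no_edge] K z endpoints
  by (auto simp: independent_set_delete_iff)

lemma independent_set_insert_leaf:
  assumes K: "independent_set V' E' K"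
  shows "independent_set V E (insert x K)"
proof (rule independent_set_insert_endpoint[OF K])
  fix r assume "r \<in> K"
  then have "r \<noteq> y"
    using K by (auto simp: independent_set_delete_iff)
  then show "{x, r} \<notin> E"
    using pendant by blast
qed simp

lemma alpha_delete: "alpha V E = alpha V' E' + 1"
proof (rule antisym)
  obtain J where J: "max_indep_set V E J"
    using max_indep_set_exists[OF finite] by blast
  have "independent_set V E (J - {x, y})"
    using max_indep_setD(1)[OF J] by (rule independent_set_subset) blast
  then have "card (J - {x, y}) \<le> alpha V' E'"
    using card_le_alpha[of V'] finite by (simp add: independent_set_delete_iff)
  moreover have "card J = card (J \<inter> {x, y}) + card (J - {x, y})"
    using independent_set_finite[OF finite max_indep_setD(1)[OF J]] by (rule card_Int_Diff)
  moreover have "card (J \<inter> {x, y}) = 1"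
    using max_indep_set_endpoint[OF J] by auto
  ultimately show "alpha V E \<le> alpha V' E' + 1"
    using max_indep_setD(2)[OF J] by simp
next
  obtain K where K: "max_indep_set V' E' K"
    using max_indep_set_exists finite by blast
  have K_indep: "independent_set V' E' K"
    using K by (rule max_indep_setD)
  then have "x \<notin> K" "finite K"
    using independent_set_finite[OF finite] by (auto simp: independent_set_delete_iff)
  moreover have "independent_set V E (insert x K)"
    using K_indep by (rule independent_set_insert_leaf)
  ultimately show "alpha V' E' + 1 \<le> alpha V E"
    using card_le_alpha[OF finite] max_indep_setD(2)[OF K] by fastforce
qed

lemma max_indep_set_delete:
  assumes J: "max_indep_set V E J"
  shows "max_indep_set V' E' (J - {x, y})"
proof -
  have "independent_set V E (J - {x, y})"
    using max_indep_setD(1)[OF J] by (rule independent_set_subset) blast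
  moreover have "card J = card (J \<inter> {x, y}) + card (J - {x, y})"
    using independent_set_finite[OF finite max_indep_setD(1)[OF J]] by (rule card_Int_Diff)
  moreover have "card (J \<inter> {x, y}) = 1"
    using max_indep_set_endpoint[OF J] by auto
  ultimately show ?thesis
    using max_indep_setD(2)[OF J] alpha_delete
    by (simp add: max_indep_set_def independent_set_delete_iff)
qed

lemma max_indep_set_insert_endpoint:
  assumes K: "max_indep_set V' E' K" and z: "z \<in> {x, y}" and no_edge: "\<And>r. r \<in> K \<Longrightarrow> {z, r} \<notin> E"
  shows "max_indep_set V E (insert z K)"
proof -
  have K_indep: "independent_set V' E' K"
    using K by (rule max_indep_setD)
  then have "z \<notin> K" "finite K"
    using z independent_set_finite[OF finite] by (auto simp: independent_set_delete_iff)
  then have "card (insert z K) = alpha V E"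
    using max_indep_setD(2)[OF K] alpha_delete by simp
  with independent_set_insert_endpoint[OF K_indep z no_edge] show ?thesis
    unfolding max_indep_set_def by blast
qed

lemma meets_max_indep_sets_of_delete:
  assumes "meets_max_indep_sets V' E' T"
  shows "meets_max_indep_sets V E T"
  unfolding meets_max_indep_sets_def
proof (intro allI impI)
  fix J assume "max_indep_set V E J"
  then have "(J - {x, y}) \<inter> T \<noteq> {}"
    using assms max_indep_set_delete unfolding meets_max_indep_sets_def by blast
  then show "J \<inter> T \<noteq> {}"
    by blast
qed

lemma meets_max_indep_sets_delete:
  assumes Z: "meets_max_indep_sets V E Z" "x \<notin> Z"
  shows "meets_max_indep_sets V' E' Z"
  unfolding meets_max_indep_sets_def
proof (intro allI impI)
  fix K assume K: "max_indep_set V' E' K"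
  have "{x, r} \<notin> E" if "r \<in> K" for r
    using that pendant max_indep_setD(1)[OF K] by (auto simp: independent_set_delete_iff)
  then have "insert x K \<inter> Z \<noteq> {}"
    using max_indep_set_insert_endpoint[OF K] Z(1) unfolding meets_max_indep_sets_def by blast
  then show "K \<inter> Z \<noteq> {}"
    using Z(2) by blast
qed

lemma meets_max_indep_sets_delete_neighbours:
  assumes Z: "meets_max_indep_sets V E Z" "y \<notin> Z"
  shows "meets_max_indep_sets V' E' (Z \<union> {r. {y, r} \<in> E})"
  unfolding meets_max_indep_sets_def
proof (intro allI impI notI)
  fix K assume K: "max_indep_set V' E' K" and disjoint: "K \<inter> (Z \<union> {r. {y, r} \<in> E}) = {}"
  then have "max_indep_set V E (insert y K)"
    by (intro max_indep_set_insert_endpoint) auto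
  then show False
    using Z disjoint unfolding meets_max_indep_sets_def by blast
qed

lemma meets_max_indep_sets_exchange:
  assumes T: "meets_max_indep_sets V' E' T"
  shows "meets_max_indep_sets V E
    (if T \<inter> {r. {y, r} \<in> E} = {} then T else insert x (T - {r. {y, r} \<in> E}))"
    (is "meets_max_indep_sets V E ?T")
  unfolding meets_max_indep_sets_def
proof (intro allI impI)
  fix J assume J: "max_indep_set V E J"
  obtain t where t: "t \<in> J - {x, y}" "t \<in> T"
    using max_indep_set_delete[OF J] T unfolding meets_max_indep_sets_def by blast
  show "J \<inter> ?T \<noteq> {}"
  proof (cases "{y, t} \<in> E")
    case False
    with t show ?thesis
      by auto
  next
    case True
    then have "y \<notin> J"
      using t max_indep_setD(1)[OF J] unfolding independent_set_def by blast
    then have "x \<in> J"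
      using max_indep_set_endpoint[OF J] by blast
    with t True show ?thesis
      by auto
  qed
qed

end

section \<open>Small hitting subsets\<close>

definition hitting_bound :: "'a set set \<Rightarrow> nat" where
  "hitting_bound E = (if \<exists>C. is_cycle E C then 3 else 2)"

definition has_small_hitting_subset :: "'a set \<Rightarrow> 'a set set \<Rightarrow> 'a set \<Rightarrow> bool" where
  "has_small_hitting_subset V E Z \<longleftrightarrow>
     (\<exists>T \<subseteq> Z \<inter> V. card T \<le> hitting_bound E \<and> meets_max_indep_sets V E T)"

definition small_hitting_after_deletions :: "'a set \<Rightarrow> 'a set set \<Rightarrow> bool" where
  "small_hitting_after_deletions V E \<longleftrightarrow> (\<forall>S Z. S \<inter> V \<noteq> {} \<longrightarrow>
     meets_max_indep_sets (V - S) (edges_avoiding E S) Z \<longrightarrow>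
     has_small_hitting_subset (V - S) (edges_avoiding E S) Z)"

lemma hitting_bound_delete_le: "hitting_bound (edges_avoiding E S) \<le> hitting_bound E"
  unfolding hitting_bound_def using is_cycle_mono[OF edges_avoiding_subset] by auto

lemma small_hitting_after_deletionsD:
  assumes "small_hitting_after_deletions V E" "S \<inter> V \<noteq> {}"
    "meets_max_indep_sets (V - S) (edges_avoiding E S) Z"
  obtains T where "T \<subseteq> Z \<inter> (V - S)" "card T \<le> hitting_bound (edges_avoiding E S)"
    "meets_max_indep_sets (V - S) (edges_avoiding E S) T"
proof -
  have "has_small_hitting_subset (V - S) (edges_avoiding E S) Z"
    using assms unfolding small_hitting_after_deletions_def by blast
  then show ?thesis
    using that unfolding has_small_hitting_subset_def by blast
qed

lemma small_hitting_subset_edge_closed: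
  assumes G: "simple_graph V E" and IH: "small_hitting_after_deletions V E"
    and A: "edge_closed E A" "A \<inter> V \<noteq> {}"
    and Z: "meets_max_indep_sets V E Z" "Z \<inter> A = {}"
  shows "has_small_hitting_subset V E Z"
proof -
  obtain T where T: "T \<subseteq> Z \<inter> (V - A)" "card T \<le> hitting_bound (edges_avoiding E A)"
    "meets_max_indep_sets (V - A) (edges_avoiding E A) T"
    by (rule small_hitting_after_deletionsD[OF IH A(2)
          meets_max_indep_sets_delete_edge_closed[OF simple_graph_finite[OF G] A(1) Z]])
  have "meets_max_indep_sets V E T"
    using meets_max_indep_sets_of_delete_edge_closed[OF simple_graph_finite[OF G] A(1) T(3)] .
  then show ?thesis
    unfolding has_small_hitting_subset_def
    using T(1,2) hitting_bound_delete_le[of E A] by (intro exI[of _ T]) auto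
qed

lemma small_hitting_subset_isolated:
  assumes G: "simple_graph V E" and IH: "small_hitting_after_deletions V E"
    and x: "x \<in> V" "\<And>u. {x, u} \<notin> E" and Z: "meets_max_indep_sets V E Z"
  shows "has_small_hitting_subset V E Z"
proof (cases "x \<in> Z")
  case True
  have "meets_max_indep_sets V E {x}"
    using max_indep_set_dominates[OF G _ x(1)] x(2) unfolding meets_max_indep_sets_def by blast
  then show ?thesis
    unfolding has_small_hitting_subset_def hitting_bound_def
    using True x(1) by (intro exI[of _ "{x}"]) auto
next
  case False
  have "edge_closed E {x}"
    unfolding edge_closed_def
  proof
    fix e assume "e \<in> E"
    then obtain u v where "e = {u, v}"
      using G unfolding simple_graph_def by blast
    then have "x \<notin> e"
      using \<open>e \<in> E\<close> x(2)[of u] x(2)[of v] by (auto simp: insert_commute)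
    then show "e \<subseteq> {x} \<or> e \<inter> {x} = {}"
      by blast
  qed
  then show ?thesis
    using small_hitting_subset_edge_closed[OF G IH _ _ Z] x(1) False by blast
qed

lemma small_hitting_subset_pendant_edge:
  assumes P: "pendant_edge V E x y" and IH: "small_hitting_after_deletions V E"
    and Z: "meets_max_indep_sets V E Z"
  shows "has_small_hitting_subset V E Z"
proof -
  interpret pendant_edge V E x y by (rule P)
  have xy: "{x, y} \<inter> V \<noteq> {}"
    using endpoints by blast
  have bound: "2 \<le> hitting_bound E" "hitting_bound E' \<le> hitting_bound E"
    by (simp add: hitting_bound_def) (rule hitting_bound_delete_le)
  consider (leaf_out) "x \<notin> Z" | (both_in) "x \<in> Z" "y \<in> Z" | (support_out) "x \<in> Z" "y \<notin> Z"
    by blast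
  then show ?thesis
  proof cases
    case leaf_out
    obtain T where T: "T \<subseteq> Z \<inter> V'" "card T \<le> hitting_bound E'" "meets_max_indep_sets V' E' T"
      by (rule small_hitting_after_deletionsD[OF IH xy meets_max_indep_sets_delete[OF Z leaf_out]])
    then show ?thesis
      unfolding has_small_hitting_subset_def using bound meets_max_indep_sets_of_delete[OF T(3)]
      by (intro exI[of _ T]) auto
  next
    case both_in
    have "meets_max_indep_sets V E {x, y}"
      using max_indep_set_endpoint unfolding meets_max_indep_sets_def by blast
    then show ?thesis
      unfolding has_small_hitting_subset_def using both_in endpoints bound
      by (intro exI[of _ "{x, y}"]) auto
  next
    case support_out
    define N where "N = {r. {y, r} \<in> E}"
    obtain T where T: "T \<subseteq> (Z \<union> N) \<inter> V'" "card T \<le> hitting_bound E'"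
      "meets_max_indep_sets V' E' T"
      unfolding N_def
      by (rule small_hitting_after_deletionsD[OF IH xy
            meets_max_indep_sets_delete_neighbours[OF Z support_out(2)]])
    have "finite T"
      using T(1) finite finite_subset by auto
    define T' where "T' = (if T \<inter> N = {} then T else insert x (T - N))"
    have "T' \<subseteq> Z \<inter> V"
      using T(1) support_out(1) endpoints(2) unfolding T'_def by auto
    moreover have "card T' \<le> card T"
    proof (cases "T \<inter> N = {}")
      case False
      then have "card (T - N) < card T"
        using \<open>finite T\<close> by (intro psubset_card_mono) auto
      then show ?thesis
        unfolding T'_def using False by (simp add: card_insert_if \<open>finite T\<close>)
    qed (simp add: T'_def)
    moreover have "meets_max_indep_sets V E T'"
      using meets_max_indep_sets_exchange[OF T(3)] unfolding T'_def N_def .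
    ultimately show ?thesis
      unfolding has_small_hitting_subset_def using T(2) bound by (intro exI[of _ T']) auto
  qed
qed

lemma max_indep_set_delete_iff_of_alpha_eq:
  assumes "alpha (V - S) (edges_avoiding E S) = alpha V E"
  shows "max_indep_set (V - S) (edges_avoiding E S) K \<longleftrightarrow> max_indep_set V E K \<and> K \<inter> S = {}"
  using assms by (auto simp: max_indep_set_def independent_set_delete_iff)

lemma meets_max_indep_sets_delete_of_alpha_eq:
  assumes "alpha (V - S) (edges_avoiding E S) = alpha V E" "meets_max_indep_sets V E Z"
  shows "meets_max_indep_sets (V - S) (edges_avoiding E S) Z"
  using assms max_indep_set_delete_iff_of_alpha_eq unfolding meets_max_indep_sets_def by blast

lemma meets_max_indep_sets_Un_of_alpha_eq:
  assumes "alpha (V - S) (edges_avoiding E S) = alpha V E"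
    "meets_max_indep_sets (V - S) (edges_avoiding E S) T"
  shows "meets_max_indep_sets V E (S \<union> T)"
  unfolding meets_max_indep_sets_def
proof (intro allI impI)
  fix J assume "max_indep_set V E J"
  then have "J \<inter> S \<noteq> {} \<or> max_indep_set (V - S) (edges_avoiding E S) J"
    using max_indep_set_delete_iff_of_alpha_eq[OF assms(1)] by blast
  then show "J \<inter> (S \<union> T) \<noteq> {}"
    using assms(2) unfolding meets_max_indep_sets_def by blast
qed

lemma small_hitting_subset_cycle_vertex:
  assumes G: "simple_graph V E" and IH: "small_hitting_after_deletions V E"
    and cycle: "is_cycle E C" and acyclic: "\<And>D. \<not> is_cycle (edges_avoiding E {v}) D"
    and v: "v \<in> Z" "v \<in> V" and Z: "meets_max_indep_sets V E Z"
  shows "has_small_hitting_subset V E Z"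
proof (cases "alpha (V - {v}) (edges_avoiding E {v}) = alpha V E")
  case True
  have "{v} \<inter> V \<noteq> {}"
    using v(2) by blast
  then obtain T where T: "T \<subseteq> Z \<inter> (V - {v})" "card T \<le> hitting_bound (edges_avoiding E {v})"
    "meets_max_indep_sets (V - {v}) (edges_avoiding E {v}) T"
    using small_hitting_after_deletionsD[OF IH _ meets_max_indep_sets_delete_of_alpha_eq[OF True Z]]
    by blast
  have "\<not> (\<exists>D. is_cycle (edges_avoiding E {v}) D)"
    using acyclic by blast
  then have "card T \<le> 2"
    using T(2) unfolding hitting_bound_def by (subst (asm) if_not_P)
  moreover have "finite T"
    using T(1) simple_graph_finite[OF G] finite_subset by auto
  ultimately have "card ({v} \<union> T) \<le> hitting_bound E"
    using cycle unfolding hitting_bound_def by (auto simp: card_insert_if)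
  then show ?thesis
    unfolding has_small_hitting_subset_def
    using T(1) v meets_max_indep_sets_Un_of_alpha_eq[OF True T(3)]
    by (intro exI[of _ "{v} \<union> T"]) auto
next
  case False
  then have "meets_max_indep_sets V E {v}"
    using meets_max_indep_sets_iff_alpha_less[OF simple_graph_finite[OF G]]
      alpha_delete_le[OF simple_graph_finite[OF G]] le_neq_implies_less by blast
  then show ?thesis
    unfolding has_small_hitting_subset_def hitting_bound_def
    using v by (intro exI[of _ "{v}"]) auto
qed

lemma small_hitting_subset_min_degree_two:
  assumes G: "simple_graph V E" and E: "at_most_one_cycle E" and IH: "small_hitting_after_deletions V E"
    and degree: "\<And>z. z \<in> V \<Longrightarrow> \<exists>y1 y2. y1 \<noteq> y2 \<and> {z, y1} \<in> E \<and> {z, y2} \<in> E"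
    and Z: "meets_max_indep_sets V E Z"
  shows "has_small_hitting_subset V E Z"
proof -
  obtain z where "z \<in> V"
    using meets_max_indep_sets_nonempty[OF simple_graph_finite[OF G] Z] by blast
  then obtain y where "{z, y} \<in> E"
    using degree by blast
  then obtain C where C: "is_cycle E C"
    using min_degree_two_cycle[OF G degree] by blast
  have "\<Union>C \<subseteq> V"
  proof
    fix p assume "p \<in> \<Union>C"
    then obtain e where "p \<in> e" "e \<in> E"
      using is_cycle_subset[OF C] by blast
    moreover obtain u v where "e = {u, v}"
      using G \<open>e \<in> E\<close> unfolding simple_graph_def by blast
    ultimately show "p \<in> V"
      using simple_graph_edgeD(2,3)[OF G, of u v] by blast
  qed
  then have CV: "\<Union>C \<inter> V \<noteq> {}"
    using cycle_vertices_nonempty[OF C] by blast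
  show ?thesis
  proof (cases "Z \<inter> \<Union>C = {}")
    case True
    show ?thesis
      by (rule small_hitting_subset_edge_closed[OF G IH unique_cycle_edge_closed[OF G E C degree] CV Z True])
  next
    case False
    then obtain v e where v: "v \<in> Z" "v \<in> e" "e \<in> C"
      by blast
    have "\<not> is_cycle (edges_avoiding E {v}) D" for D
    proof
      assume D: "is_cycle (edges_avoiding E {v}) D"
      have "D = C"
        using E C is_cycle_mono[OF edges_avoiding_subset D] unfolding at_most_one_cycle_def by blast
      then have "e \<in> edges_avoiding E {v}"
        using is_cycle_subset[OF D] v(3) by blast
      then show False
        using v(2) unfolding edges_avoiding_def by blast
    qed
    moreover have "v \<in> V"
      using v(2,3) \<open>\<Union>C \<subseteq> V\<close> by blast
    ultimately show ?thesis
      by (rule small_hitting_subset_cycle_vertex[OF G IH C _ v(1) _ Z])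
  qed
qed

theorem small_hitting_subset_exists:
  assumes "simple_graph V E" "at_most_one_cycle E" "meets_max_indep_sets V E Z"
  shows "has_small_hitting_subset V E Z"
  using assms
proof (induction "card V" arbitrary: V E Z rule: less_induct)
  case less
  note G = less.prems(1) and Z = less.prems(3)
  have IH: "small_hitting_after_deletions V E"
    unfolding small_hitting_after_deletions_def
  proof (intro allI impI)
    fix S Z' assume "S \<inter> V \<noteq> {}" "meets_max_indep_sets (V - S) (edges_avoiding E S) Z'"
    moreover have "card (V - S) < card V"
      using \<open>S \<inter> V \<noteq> {}\<close> simple_graph_finite[OF G] by (intro psubset_card_mono) auto
    ultimately show "has_small_hitting_subset (V - S) (edges_avoiding E S) Z'"
      using less.hyps simple_graph_delete[OF G] at_most_one_cycle_delete[OF less.prems(2)] by blast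
  qed
  show ?case
  proof (cases "\<forall>z\<in>V. \<exists>y1 y2. y1 \<noteq> y2 \<and> {z, y1} \<in> E \<and> {z, y2} \<in> E")
    case True
    then show ?thesis
      using small_hitting_subset_min_degree_two[OF G less.prems(2) IH _ Z] by blast
  next
    case False
    then obtain x where x: "x \<in> V" "\<And>y1 y2. {x, y1} \<in> E \<Longrightarrow> {x, y2} \<in> E \<Longrightarrow> y1 = y2"
      by blast
    show ?thesis
    proof (cases "\<exists>y. {x, y} \<in> E")
      case True
      then obtain y where "{x, y} \<in> E"
        by blast
      then have "pendant_edge V E x y"
        using G x(2) by unfold_locales blast+
      then show ?thesis
        by (rule small_hitting_subset_pendant_edge[OF _ IH Z])
    next
      case False
      then show ?thesis
        using small_hitting_subset_isolated[OF G IH x(1) _ Z] by blast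
    qed
  qed
qed

lemma card_le_3_obtain:
  assumes "finite T" "T \<noteq> {}" "card T \<le> 3"
  obtains u v w where "T = {u, v, w}"
proof -
  have "card T \<noteq> 0"
    using assms(1,2) by simp
  then have "card T \<in> {1, 2, 3}"
    using assms(3) by auto
  then show ?thesis
    using that by (auto simp: card_1_singleton_iff card_2_iff card_3_iff)
qed

lemma alpha_del_verts: "case_prod alpha (del_verts V E S) = alpha (V - S) (edges_avoiding E S)"
  by (simp add: del_verts_def edges_avoiding_def)

theorem lemma4:
  fixes V :: "'a set" and E :: "'a set set" and Z :: "'a set"
  assumes "pseudotree V E"
    and "alpha V E > case_prod alpha (del_verts V E Z)"
  shows "\<exists>u v w. u \<in> Z \<inter> V \<and> v \<in> Z \<inter> V \<and> w \<in> Z \<inter> V \<and>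
           alpha V E > case_prod alpha (del_verts V E {u, v, w})"
proof -
  have G: "simple_graph V E" and E: "at_most_one_cycle E"
    using assms(1) unfolding pseudotree_def at_most_one_cycle_def by auto
  have V: "finite V"
    using G by (rule simple_graph_finite)
  have "meets_max_indep_sets V E Z"
    using assms(2) meets_max_indep_sets_iff_alpha_less[OF V] by (simp add: alpha_del_verts)
  then have "has_small_hitting_subset V E Z"
    by (rule small_hitting_subset_exists[OF G E])
  then obtain T where T: "T \<subseteq> Z \<inter> V" "card T \<le> hitting_bound E" "meets_max_indep_sets V E T"
    unfolding has_small_hitting_subset_def by blast
  have "finite T"
    using T(1) V by (meson finite_subset inf_le2 order_trans)
  moreover have "T \<noteq> {}"
    using meets_max_indep_sets_nonempty[OF V T(3)] by blast
  moreover have "card T \<le> 3"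
    using T(2) unfolding hitting_bound_def by (auto split: if_splits)
  ultimately obtain u v w where "T = {u, v, w}"
    by (rule card_le_3_obtain)
  moreover have "alpha (V - T) (edges_avoiding E T) < alpha V E"
    using T(3) meets_max_indep_sets_iff_alpha_less[OF V] by blast
  ultimately show ?thesis
    using T(1) by (auto simp: alpha_del_verts)
qed

end
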